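(* Let $\nu>0$ and let $f:[0,1]\to[f(0),f(1)]$ be an orientation-preserving diffeomorphism of class $C^{2+\nu}$. Then there is $C>0$ (depending only on $f$) such that for every $[a,b]\subset[0,1]$ with $\delta=b-a>0$, setting $\tilde f=\mathcal Z_{[a,b]}(f)$, $$d_{C^2}\big(\tilde f,M_{N_{\tilde f}}\big)\le C\,\delta^{1+\nu}.$$
   Context: For a $C^2$ orientation-preserving diffeomorphism $g$ of an interval, its nonlinearity is $n_g=D^2g/Dg=D(\ln Dg)$; for $g$ defined on $[0,1]$, $N_g=\int_0^1 n_g(x)\,dx$. Zoom: for an interval $H$ and a diffeomorphism $g$ on $H$, $\mathcal Z_H(g)=A_1\circ g\circ A_2:[0,1]\to[0,1]$, where $A_2$ is the orientation-preserving affine map sending $[0,1]$ onto $H$ and $A_1$ the orientation-preserving affine map sending $g(H)$ onto $[0,1]$. For $N\in\mathbb R$, $M_N(x)=\dfrac{xe^{-N/2}}{1+x(e^{-N/2}-1)}$ on $[0,1]$. $d_{C^2}(f,g)=\sum_{i=0}^2\sup_{x\in[0,1]}|D^if(x)-D^ig(x)|$. *)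

theory Defs
  imports "HOL-Analysis.Analysis"
begin

definition D01 :: "(real \<Rightarrow> real) \<Rightarrow> real \<Rightarrow> real" where
  "D01 g x = (THE d. (g has_real_derivative d) (at x within {0..1}))"

definition nonlin :: "(real \<Rightarrow> real) \<Rightarrow> real \<Rightarrow> real" where
  "nonlin g x = D01 (D01 g) x / D01 g x"

definition Nint :: "(real \<Rightarrow> real) \<Rightarrow> real" where
  "Nint g = integral {0..1} (nonlin g)"

definition zoom :: "real \<Rightarrow> real \<Rightarrow> (real \<Rightarrow> real) \<Rightarrow> real \<Rightarrow> real" where
  "zoom a b g x = (g (a + (b - a) * x) - g a) / (g b - g a)"

definition MN :: "real \<Rightarrow> real \<Rightarrow> real" where
  "MN N x = x * exp (- N / 2) / (1 + x * (exp (- N / 2) - 1))"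

definition dC2 :: "(real \<Rightarrow> real) \<Rightarrow> (real \<Rightarrow> real) \<Rightarrow> real" where
  "dC2 f g = (\<Sum>i\<le>(2::nat). Sup ((\<lambda>x. \<bar>(D01 ^^ i) f x - (D01 ^^ i) g x\<bar>) ` {0..1}))"

definition C2nu_diffeo :: "real \<Rightarrow> (real \<Rightarrow> real) \<Rightarrow> bool" where
  "C2nu_diffeo \<nu> f \<longleftrightarrow>
     (\<exists>f1 f2. (\<forall>x\<in>{0..1}. (f has_real_derivative f1 x) (at x within {0..1})
                        \<and> (f1 has_real_derivative f2 x) (at x within {0..1})
                        \<and> f1 x > 0)
            \<and> (\<exists>H. \<forall>x\<in>{0..1}. \<forall>y\<in>{0..1}. \<bar>f2 x - f2 y\<bar> \<le> H * \<bar>x - y\<bar> powr \<nu>))"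

end

theory Submission
  imports Defs
begin

text \<open>
  For \<open>g = zoom a b f\<close> with \<open>\<delta> = b - a\<close>, the nonlinearity of \<open>g\<close> is
  \<open>n_g(x) = \<delta> n_f(a + \<delta> x)\<close>; since \<open>n_f\<close> is bounded and \<open>\<nu>\<close>-Hoelder, \<open>n_g\<close> is
  within \<open>O(\<delta>^{1+\<nu>})\<close> of its mean \<open>N = N_g\<close>, and \<open>|N| = O(\<delta>)\<close>.  The Moebius map
  \<open>M_N\<close> has total nonlinearity exactly \<open>N\<close> and its nonlinearity oscillates by
  \<open>O(N^2) = O(\<delta>^2)\<close>, so \<open>n_g\<close> and \<open>n_{M_N}\<close> are \<open>O(\<delta>^{1+\<nu>})\<close>-close.  Finally,
  two increasing \<open>C^2\<close> maps of \<open>[0,1]\<close> agreeing at both endpoints whose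
  nonlinearities are \<open>\<epsilon>\<close>-close are \<open>O(\<epsilon>)\<close>-close in \<open>C^2\<close>: the logarithms of their
  derivatives differ by at most \<open>\<epsilon>\<close>, because by Rolle the derivatives coincide somewhere.
\<close>

definition twice_deriv01 :: "(real \<Rightarrow> real) \<Rightarrow> (real \<Rightarrow> real) \<Rightarrow> (real \<Rightarrow> real) \<Rightarrow> bool" where
  "twice_deriv01 g g1 g2 \<longleftrightarrow>
     (\<forall>x\<in>{0..1}. (g has_real_derivative g1 x) (at x within {0..1})
               \<and> (g1 has_real_derivative g2 x) (at x within {0..1}))"

text \<open>One-sided derivatives on \<open>[0,1]\<close> are unique, so \<open>D01\<close> returns any derivative.\<close>

lemma D01_eq:
  assumes "x \<in> {0..1}" "(g has_real_derivative d) (at x within {0..1})"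
  shows "D01 g x = d"
proof -
  have "d' = d" if "(g has_real_derivative d') (at x within {0..1})" for d'
    using vector_derivative_unique_within_closed_interval[of 0 1 x g] assms that
    by (metis cbox_interval has_real_derivative_iff_has_vector_derivative zero_less_one)
  then show ?thesis
    unfolding D01_def using assms(2) by (intro the_equality) blast+
qed

lemma twice_deriv01_D01:
  assumes "twice_deriv01 g g1 g2" "x \<in> {0..1}"
  shows "D01 g x = g1 x" "D01 (D01 g) x = g2 x"
proof -
  have D1: "D01 g y = g1 y" if "y \<in> {0..1}" for y
    using assms(1) that by (auto simp: twice_deriv01_def intro: D01_eq)
  then show "D01 g x = g1 x" using assms(2) .
  have "(g1 has_real_derivative g2 x) (at x within {0..1})"
    using assms unfolding twice_deriv01_def by blast
  then have "(D01 g has_real_derivative g2 x) (at x within {0..1})"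
    by (rule has_field_derivative_transform_within[OF _ zero_less_one assms(2)]) (simp add: D1)
  then show "D01 (D01 g) x = g2 x" using D01_eq assms(2) by blast
qed

lemma twice_deriv01_nonlin:
  assumes "twice_deriv01 g g1 g2" "x \<in> {0..1}"
  shows "nonlin g x = g2 x / g1 x"
  using twice_deriv01_D01[OF assms] by (simp add: nonlin_def)

lemma dC2_le:
  assumes g: "twice_deriv01 g g1 g2" and m: "twice_deriv01 m m1 m2"
    and "\<And>x. x \<in> {0..1} \<Longrightarrow> \<bar>g x - m x\<bar> \<le> c0"
    and "\<And>x. x \<in> {0..1} \<Longrightarrow> \<bar>g1 x - m1 x\<bar> \<le> c1"
    and "\<And>x. x \<in> {0..1} \<Longrightarrow> \<bar>g2 x - m2 x\<bar> \<le> c2"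
  shows "dC2 g m \<le> c0 + c1 + c2"
proof -
  have sup_le: "Sup ((\<lambda>x. \<bar>(D01 ^^ i) g x - (D01 ^^ i) m x\<bar>) ` {0..1}) \<le> c"
    if "\<And>x. x \<in> {0..1} \<Longrightarrow> \<bar>(D01 ^^ i) g x - (D01 ^^ i) m x\<bar> \<le> c" for i c
    using that by (intro cSUP_least) auto
  show ?thesis
    unfolding dC2_def
    using sup_le[of 0 c0] sup_le[of 1 c1] sup_le[of 2 c2] assms(3-5)
      twice_deriv01_D01[OF g] twice_deriv01_D01[OF m]
    by (simp add: numeral_2_eq_2 atMost_Suc add_mono)
qed

lemma abs_exp_minus_one_le: "\<bar>exp (t::real) - 1\<bar> \<le> \<bar>t\<bar> * exp \<bar>t\<bar>"
proof (cases "t \<ge> 0")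
  case True
  have "exp t * (1 - t) \<le> exp t * exp (-t)"
    using exp_ge_add_one_self[of "-t"] by (intro mult_left_mono) auto
  then show ?thesis using True by (simp add: exp_minus algebra_simps)
next
  case False
  have "exp t \<le> 1" "1 + t \<le> exp t"
    using False exp_ge_add_one_self[of t] by auto
  then have "\<bar>exp t - 1\<bar> \<le> -t"
    by linarith
  also have "\<dots> \<le> \<bar>t\<bar> * exp \<bar>t\<bar>"
    using False by (simp add: mult_le_cancel_left1)
  finally show ?thesis .
qed

lemma le_powr_of_le_one:
  fixes x \<nu> :: real
  assumes "0 \<le> x" "x \<le> 1" "\<nu> \<le> 1"
  shows "x \<le> x powr \<nu>"
proof (cases "x = 0")
  case False
  then show ?thesis
    using powr_mono'[of \<nu> 1 x] assms by simp
qed simp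

lemma powr_one_plus_bounds:
  fixes \<delta> \<nu> :: real
  assumes "0 < \<delta>" "\<delta> \<le> 1" "0 \<le> \<nu>" "\<nu> \<le> 1"
  shows "\<delta>\<^sup>2 \<le> \<delta> powr (1 + \<nu>)" and "\<delta> powr (1 + \<nu>) \<le> \<delta>"
  using powr_mono'[of "1 + \<nu>" 2 \<delta>] powr_mono'[of 1 "1 + \<nu>" \<delta>] assms
  by (simp_all add: powr_realpow)

lemma mult_exp_le_of_le_one:
  fixes c P :: real
  assumes "0 \<le> c" "0 \<le> P" "P \<le> 1"
  shows "c * P * exp (c * P) \<le> c * exp c * P"
proof -
  have "exp (c * P) \<le> exp c"
    using assms by (simp add: mult_left_le)
  then have "(c * P) * exp (c * P) \<le> (c * P) * exp c"
    using assms by (intro mult_left_mono) auto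
  then show ?thesis
    by (simp add: ac_simps)
qed

text \<open>Difference of quotients, used to show that \<open>f''/f'\<close> is Hoelder.\<close>

lemma quotient_diff_le:
  fixes u u' p p' m B H r :: real
  assumes "m \<le> p" "m \<le> p'" "0 < m"
    and "\<bar>u - u'\<bar> \<le> H * r" "\<bar>u'\<bar> \<le> B" "\<bar>p' - p\<bar> \<le> B * r" "0 \<le> B"
  shows "\<bar>u / p - u' / p'\<bar> \<le> (H / m + B\<^sup>2 / m\<^sup>2) * r"
proof -
  have p: "0 < p" "0 < p'" using assms by linarith+
  have "u / p - u' / p' = (u - u') / p + u' * (p' - p) / (p * p')"
    using p by (simp add: field_simps)
  then have "\<bar>u / p - u' / p'\<bar> \<le> \<bar>(u - u') / p\<bar> + \<bar>u' * (p' - p) / (p * p')\<bar>"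
    by (simp only: abs_triangle_ineq)
  also have "\<dots> = \<bar>u - u'\<bar> / p + \<bar>u'\<bar> * \<bar>p' - p\<bar> / (p * p')"
    using p by (simp add: abs_mult)
  also have "\<dots> \<le> H * r / m + B * (B * r) / (m * m)"
  proof (rule add_mono)
    show "\<bar>u - u'\<bar> / p \<le> H * r / m"
      using assms by (intro frac_le) auto
    have "\<bar>u'\<bar> * \<bar>p' - p\<bar> \<le> B * (B * r)"
      using assms by (intro mult_mono) auto
    moreover have "m * m \<le> p * p'"
      using assms by (intro mult_mono) auto
    ultimately show "\<bar>u'\<bar> * \<bar>p' - p\<bar> / (p * p') \<le> B * (B * r) / (m * m)"
      using assms by (intro frac_le) auto
  qed
  finally show ?thesis
    by (simp add: power2_eq_square algebra_simps)
qed

lemma hoelder_imp_continuous_on: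
  fixes h :: "real \<Rightarrow> real"
  assumes hol: "\<And>x y. x \<in> S \<Longrightarrow> y \<in> S \<Longrightarrow> \<bar>h x - h y\<bar> \<le> H * \<bar>x - y\<bar> powr \<nu>"
    and "0 < \<nu>"
  shows "continuous_on S h"
  unfolding continuous_on_def
proof
  fix x assume x: "x \<in> S"
  have "((\<lambda>y. \<bar>y - x\<bar> powr \<nu>) \<longlongrightarrow> 0) (at x within S)"
    by (rule tendsto_zero_powrI[where f="\<lambda>y. \<bar>y - x\<bar>"])
       (use \<open>0 < \<nu>\<close> in \<open>auto intro!: tendsto_eq_intros\<close>)
  then have lim0: "((\<lambda>y. \<bar>H\<bar> * \<bar>y - x\<bar> powr \<nu>) \<longlongrightarrow> 0) (at x within S)"
    by (rule tendsto_mult_right_zero)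
  have "\<bar>h y - h x\<bar> \<le> \<bar>H\<bar> * \<bar>y - x\<bar> powr \<nu>" if "y \<in> S" for y
    using hol[OF that x] by (smt (verit) mult_right_mono powr_ge_zero)
  then have "((\<lambda>y. h y - h x) \<longlongrightarrow> 0) (at x within S)"
    by (intro Lim_null_comparison[OF _ lim0]) (auto simp: eventually_at_filter)
  then show "(h \<longlongrightarrow> h x) (at x within S)"
    using LIM_zero_cancel by blast
qed

lemma hoelder_const_nonneg:
  fixes u :: "real \<Rightarrow> real"
  assumes "\<And>s t. s \<in> {0..1} \<Longrightarrow> t \<in> {0..1} \<Longrightarrow> \<bar>u s - u t\<bar> \<le> H * \<bar>s - t\<bar> powr \<nu>"
  shows "0 \<le> H"
proof -
  have "\<bar>u 0 - u 1\<bar> \<le> H * \<bar>0 - 1\<bar> powr \<nu>"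
    by (rule assms) auto
  then show ?thesis
    using abs_ge_zero[of "u 0 - u 1"] by simp
qed

lemma integral_deviation_le:
  fixes h :: "real \<Rightarrow> real"
  assumes "(h has_integral I) {0..1}"
    and osc: "\<And>x y. x \<in> {0..1} \<Longrightarrow> y \<in> {0..1} \<Longrightarrow> \<bar>h x - h y\<bar> \<le> V"
    and x: "x \<in> {0..1}"
  shows "\<bar>h x - I\<bar> \<le> V"
proof -
  have "I \<le> h x + V"
    using has_integral_le[OF assms(1) has_integral_const_real[of "h x + V" 0 1]] osc[OF _ x]
    by (force simp: abs_le_iff)
  moreover have "h x - V \<le> I"
    using has_integral_le[OF has_integral_const_real[of "h x - V" 0 1] assms(1)] osc[OF _ x]
    by (force simp: abs_le_iff)
  ultimately show ?thesis by auto
qed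

lemma abs_le_of_deriv_bound:
  fixes h h' :: "real \<Rightarrow> real"
  assumes dh: "\<And>y. y \<in> {0..1} \<Longrightarrow> (h has_real_derivative h' y) (at y within {0..1})"
    and bound: "\<And>y. y \<in> {0..1} \<Longrightarrow> \<bar>h' y\<bar> \<le> c"
    and z: "z \<in> {0..1}" "h z = 0" and x: "x \<in> {0..1}"
  shows "\<bar>h x\<bar> \<le> c"
proof -
  have "norm (h x - h z) \<le> c * norm (x - z)"
    by (rule field_differentiable_bound[OF convex_real_interval(5) dh]) (use bound x z in auto)
  moreover have "c * \<bar>x - z\<bar> \<le> c"
    using bound[OF x] x z(1) by (intro mult_left_le) auto
  ultimately show ?thesis
    using z(2) by simp
qed

lemma deriv_coincide_somewhere:
  assumes dg: "\<And>x. x \<in> {0..1} \<Longrightarrow> (g has_real_derivative g1 x) (at x within {0..1})"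
    and dm: "\<And>x. x \<in> {0..1} \<Longrightarrow> (m has_real_derivative m1 x) (at x within {0..1})"
    and ends: "g 0 = m 0" "g 1 = m 1"
  obtains z where "z \<in> {0..1}" "g1 z = m1 z"
proof -
  define h where "h x = g x - m x" for x
  have dh: "(h has_real_derivative g1 x - m1 x) (at x within {0..1})" if "x \<in> {0..1}" for x
    unfolding h_def using dg[OF that] dm[OF that] by (rule DERIV_diff)
  have "\<exists>z. 0 < z \<and> z < 1 \<and> (\<lambda>v. (g1 z - m1 z) * v) = (\<lambda>v. 0)"
  proof (rule Rolle_deriv[of 0 1 h])
    show "h 0 = h 1" unfolding h_def using ends by simp
    show "continuous_on {0..1} h" using dh by (rule DERIV_continuous_on)
    show "(h has_derivative (\<lambda>v. (g1 x - m1 x) * v)) (at x)" if "0 < x" "x < 1" for x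
      using dh[of x] at_within_Icc_at[of 0 x 1] that
      by (simp add: has_field_derivative_def)
  qed simp
  then obtain z where "0 < z" "z < 1" "(\<lambda>v. (g1 z - m1 z) * v) = (\<lambda>v. 0)"
    by blast
  moreover from this(3) have "g1 z - m1 z = 0"
    by (metis mult_cancel_left1)
  ultimately show ?thesis
    using that[of z] by simp
qed

lemma log_deriv_close:
  assumes g: "twice_deriv01 g g1 g2" and m: "twice_deriv01 m m1 m2"
    and pos: "\<And>x. x \<in> {0..1} \<Longrightarrow> 0 < g1 x" "\<And>x. x \<in> {0..1} \<Longrightarrow> 0 < m1 x"
    and ends: "g 0 = m 0" "g 1 = m 1"
    and close: "\<And>x. x \<in> {0..1} \<Longrightarrow> \<bar>g2 x / g1 x - m2 x / m1 x\<bar> \<le> \<epsilon>"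
    and x: "x \<in> {0..1}"
  shows "\<bar>ln (g1 x) - ln (m1 x)\<bar> \<le> \<epsilon>"
proof -
  obtain z where z: "z \<in> {0..1}" "g1 z = m1 z"
    using deriv_coincide_somewhere[of g g1 m m1] g m ends
    unfolding twice_deriv01_def by blast
  define \<psi> where "\<psi> y = ln (g1 y) - ln (m1 y)" for y
  have d\<psi>: "(\<psi> has_real_derivative g2 y / g1 y - m2 y / m1 y) (at y within {0..1})"
    if "y \<in> {0..1}" for y
    unfolding \<psi>_def using g m pos that unfolding twice_deriv01_def
    by (auto intro!: derivative_eq_intros)
  have \<psi>z: "\<psi> z = 0"
    unfolding \<psi>_def using z(2) by simp
  have "\<bar>\<psi> x\<bar> \<le> \<epsilon>"
    by (rule abs_le_of_deriv_bound[where h'="\<lambda>y. g2 y / g1 y - m2 y / m1 y",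
          OF d\<psi> close z(1) \<psi>z x])
  then show ?thesis
    unfolding \<psi>_def .
qed

lemma deriv_close_of_nonlin_close:
  assumes "twice_deriv01 g g1 g2" "twice_deriv01 m m1 m2"
    and pos: "\<And>x. x \<in> {0..1} \<Longrightarrow> 0 < g1 x" "\<And>x. x \<in> {0..1} \<Longrightarrow> 0 < m1 x"
    and "g 0 = m 0" "g 1 = m 1"
    and "\<And>x. x \<in> {0..1} \<Longrightarrow> \<bar>g2 x / g1 x - m2 x / m1 x\<bar> \<le> \<epsilon>"
    and x: "x \<in> {0..1}"
  shows "g1 x \<le> m1 x * exp \<epsilon>" and "\<bar>g1 x - m1 x\<bar> \<le> m1 x * (\<epsilon> * exp \<epsilon>)"
proof -
  define \<psi> where "\<psi> = ln (g1 x) - ln (m1 x)"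
  have g1_eq: "g1 x = m1 x * exp \<psi>"
    using pos[OF x] by (simp add: \<psi>_def exp_diff)
  have \<psi>_le: "\<bar>\<psi>\<bar> \<le> \<epsilon>"
    unfolding \<psi>_def by (rule log_deriv_close[OF assms])
  show "g1 x \<le> m1 x * exp \<epsilon>"
    unfolding g1_eq using \<psi>_le pos(2)[OF x] by (intro mult_left_mono) auto
  have "g1 x - m1 x = m1 x * (exp \<psi> - 1)"
    unfolding g1_eq by (simp add: right_diff_distrib)
  then have "\<bar>g1 x - m1 x\<bar> = m1 x * \<bar>exp \<psi> - 1\<bar>"
    using pos(2)[OF x] by (simp add: abs_mult)
  also have "\<dots> \<le> m1 x * (\<bar>\<psi>\<bar> * exp \<bar>\<psi>\<bar>)"
    using abs_exp_minus_one_le[of \<psi>] pos(2)[OF x] by (intro mult_left_mono) auto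
  also have "\<dots> \<le> m1 x * (\<epsilon> * exp \<epsilon>)"
    using \<psi>_le pos(2)[OF x] by (intro mult_left_mono mult_mono) auto
  finally show "\<bar>g1 x - m1 x\<bar> \<le> m1 x * (\<epsilon> * exp \<epsilon>)" .
qed

lemma dC2_le_of_nonlin_close:
  assumes g: "twice_deriv01 g g1 g2" and m: "twice_deriv01 m m1 m2"
    and pos: "\<And>x. x \<in> {0..1} \<Longrightarrow> 0 < g1 x" "\<And>x. x \<in> {0..1} \<Longrightarrow> 0 < m1 x"
    and ends: "g 0 = m 0" "g 1 = m 1"
    and close: "\<And>x. x \<in> {0..1} \<Longrightarrow> \<bar>g2 x / g1 x - m2 x / m1 x\<bar> \<le> \<epsilon>"
    and m1_le: "\<And>x. x \<in> {0..1} \<Longrightarrow> m1 x \<le> A"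
    and nonlin_m_le: "\<And>x. x \<in> {0..1} \<Longrightarrow> \<bar>m2 x / m1 x\<bar> \<le> B"
  shows "dC2 g m \<le> A * (3 + B) * (\<epsilon> * exp \<epsilon>)"
proof -
  define \<eta> where "\<eta> = \<epsilon> * exp \<epsilon>"
  have \<epsilon>0: "0 \<le> \<epsilon>" using close[of 0] by auto
  have B0: "0 \<le> B"
    using nonlin_m_le[of 0] by (meson abs_ge_zero order_trans atLeastAtMost_iff order_refl zero_le_one)
  have g1_le: "g1 x \<le> A * exp \<epsilon>" if "x \<in> {0..1}" for x
    by (rule order_trans[OF deriv_close_of_nonlin_close(1)[OF g m pos ends close that]
          mult_right_mono[OF m1_le[OF that] exp_ge_zero]])
  have \<eta>0: "0 \<le> \<epsilon> * exp \<epsilon>"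
    using \<epsilon>0 by simp
  have D1: "\<bar>g1 x - m1 x\<bar> \<le> A * \<eta>" if "x \<in> {0..1}" for x
    unfolding \<eta>_def
    by (rule order_trans[OF deriv_close_of_nonlin_close(2)[OF g m pos ends close that]
          mult_right_mono[OF m1_le[OF that] \<eta>0]])
  have D0: "\<bar>g x - m x\<bar> \<le> A * \<eta>" if "x \<in> {0..1}" for x
    by (rule abs_le_of_deriv_bound[where h="\<lambda>y. g y - m y" and h'="\<lambda>y. g1 y - m1 y", OF _ D1 _ _ that])
       (use g m ends in \<open>auto simp: twice_deriv01_def intro: DERIV_diff\<close>)
  have D2: "\<bar>g2 x - m2 x\<bar> \<le> \<epsilon> * (A * exp \<epsilon>) + B * (A * \<eta>)" if "x \<in> {0..1}" for x
  proof -
    have "g2 x - m2 x = (g2 x / g1 x - m2 x / m1 x) * g1 x + (m2 x / m1 x) * (g1 x - m1 x)"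
      using pos[OF that] by (simp add: field_simps)
    then have "\<bar>g2 x - m2 x\<bar>
        \<le> \<bar>g2 x / g1 x - m2 x / m1 x\<bar> * \<bar>g1 x\<bar> + \<bar>m2 x / m1 x\<bar> * \<bar>g1 x - m1 x\<bar>"
      by (simp only: abs_mult[symmetric] abs_triangle_ineq)
    also have "\<dots> \<le> \<epsilon> * (A * exp \<epsilon>) + B * (A * \<eta>)"
      using close[OF that] g1_le[OF that] pos(1)[OF that] nonlin_m_le[OF that] D1[OF that] \<epsilon>0 B0
      by (intro add_mono mult_mono) auto
    finally show ?thesis .
  qed
  have "dC2 g m \<le> A * \<eta> + A * \<eta> + (\<epsilon> * (A * exp \<epsilon>) + B * (A * \<eta>))"
    by (rule dC2_le[OF g m D0 D1 D2])
  also have "\<dots> = A * (3 + B) * \<eta>"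
    unfolding \<eta>_def by (simp add: algebra_simps)
  finally show ?thesis
    unfolding \<eta>_def .
qed

definition MN1 :: "real \<Rightarrow> real \<Rightarrow> real" where
  "MN1 N x = exp (- N / 2) / (1 + x * (exp (- N / 2) - 1))\<^sup>2"

definition MN2 :: "real \<Rightarrow> real \<Rightarrow> real" where
  "MN2 N x = - 2 * (exp (- N / 2) - 1) * exp (- N / 2) / (1 + x * (exp (- N / 2) - 1)) ^ 3"

definition nonlin_MN :: "real \<Rightarrow> real \<Rightarrow> real" where
  "nonlin_MN N x = - 2 * (exp (- N / 2) - 1) / (1 + x * (exp (- N / 2) - 1))"

text \<open>The denominator \<open>1 + x (e - 1)\<close> is a convex combination of \<open>1\<close> and \<open>e\<close>.\<close>

lemma MN_denominator_ge:
  fixes N x :: real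
  assumes "x \<in> {0..1}"
  shows "min 1 (exp (- N / 2)) \<le> 1 + x * (exp (- N / 2) - 1)"
proof -
  let ?e = "exp (- N / 2)"
  have "(1 - x) * min 1 ?e + x * min 1 ?e \<le> (1 - x) * 1 + x * ?e"
    using assms by (intro add_mono mult_left_mono) auto
  then show ?thesis by (simp add: algebra_simps)
qed

lemma MN_denominator_pos:
  fixes N x :: real
  assumes "x \<in> {0..1}"
  shows "0 < 1 + x * (exp (- N / 2) - 1)"
  using MN_denominator_ge[OF assms, of N] exp_gt_zero[of "- N / 2"] by linarith

lemma moebius_deriv1:
  fixes e x :: real
  assumes "1 + x * (e - 1) \<noteq> 0"
  shows "((\<lambda>x. x * e / (1 + x * (e - 1))) has_real_derivative e / (1 + x * (e - 1))\<^sup>2) (at x)"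
  using assms by (auto intro!: derivative_eq_intros simp: field_simps power2_eq_square)

lemma moebius_deriv2:
  fixes e x :: real
  assumes "1 + x * (e - 1) \<noteq> 0"
  shows "((\<lambda>x. e / (1 + x * (e - 1))\<^sup>2) has_real_derivative
           - 2 * (e - 1) * e / (1 + x * (e - 1)) ^ 3) (at x)"
proof -
  have key: "- (e * (2 * ((e - 1) * d)) / d ^ 4) = (2 - 2 * e) * e / d ^ 3"
    if "d \<noteq> 0" for d :: real
  proof -
    have "d ^ 4 = d ^ 3 * d" by (simp add: eval_nat_numeral)
    then show ?thesis using that by (simp add: field_simps)
  qed
  show ?thesis
    using assms by (auto intro!: derivative_eq_intros simp: key)
qed

lemma MN_twice_deriv01: "twice_deriv01 (MN N) (MN1 N) (MN2 N)"
  unfolding twice_deriv01_def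
proof (intro ballI conjI)
  fix x :: real assume x: "x \<in> {0..1}"
  let ?e = "exp (- N / 2)"
  have d: "1 + x * (?e - 1) \<noteq> 0" using MN_denominator_pos[OF x, of N] by simp
  have MN_eq: "MN N = (\<lambda>x. x * ?e / (1 + x * (?e - 1)))"
    and MN1_eq: "MN1 N = (\<lambda>x. ?e / (1 + x * (?e - 1))\<^sup>2)"
    by (simp_all add: fun_eq_iff MN_def MN1_def)
  show "(MN N has_real_derivative MN1 N x) (at x within {0..1})"
    unfolding MN_eq MN1_def by (rule has_field_derivative_at_within[OF moebius_deriv1[OF d]])
  show "(MN1 N has_real_derivative MN2 N x) (at x within {0..1})"
    unfolding MN1_eq MN2_def by (rule has_field_derivative_at_within[OF moebius_deriv2[OF d]])
qed

lemma MN_endpoints: "MN N 0 = 0" "MN N 1 = 1"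
  by (simp_all add: MN_def)

lemma MN1_pos:
  assumes "x \<in> {0..1}"
  shows "0 < MN1 N x"
  using MN_denominator_pos[OF assms, of N] unfolding MN1_def by simp

lemma MN_nonlin:
  assumes "x \<in> {0..1}"
  shows "MN2 N x / MN1 N x = nonlin_MN N x"
proof -
  define d where "d = 1 + x * (exp (- N / 2) - 1)"
  have "d \<noteq> 0" "d ^ 3 = d\<^sup>2 * d"
    using MN_denominator_pos[OF assms, of N] unfolding d_def by (auto simp: eval_nat_numeral)
  then show ?thesis
    unfolding MN1_def MN2_def nonlin_MN_def d_def[symmetric] by (simp add: field_simps)
qed

text \<open>The defining property of \<open>M_N\<close>: its total nonlinearity is \<open>N\<close>, since
  \<open>-2 ln (1 + x (e - 1))\<close> is a primitive of its nonlinearity.\<close>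

lemma nonlin_MN_integral: "(nonlin_MN N has_integral N) {0..1}"
proof -
  let ?e = "exp (- N / 2)"
  define F where "F x = - 2 * ln (1 + x * (?e - 1))" for x
  have "(nonlin_MN N has_integral F 1 - F 0) {0..1}"
  proof (rule fundamental_theorem_of_calculus)
    fix x :: real assume x: "x \<in> {0..1}"
    have "(F has_real_derivative nonlin_MN N x) (at x)"
      unfolding F_def nonlin_MN_def using MN_denominator_pos[OF x, of N]
      by (auto intro!: derivative_eq_intros simp: field_simps)
    then show "(F has_vector_derivative nonlin_MN N x) (at x within {0..1})"
      by (simp add: has_real_derivative_iff_has_vector_derivative[symmetric]
          has_field_derivative_at_within)
  qed simp
  moreover have "F 1 - F 0 = N" by (simp add: F_def)
  ultimately show ?thesis by simp
qed

lemma MN_parameter_bounds: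
  fixes N x :: real
  assumes "x \<in> {0..1}"
  shows "1 / (1 + x * (exp (- N / 2) - 1)) \<le> exp (\<bar>N\<bar> / 2)"
    and "\<bar>exp (- N / 2) - 1\<bar> \<le> \<bar>N\<bar> / 2 * exp (\<bar>N\<bar> / 2)"
proof -
  let ?e = "exp (- N / 2)" and ?k = "exp (\<bar>N\<bar> / 2)"
  let ?d = "1 + x * (?e - 1)"
  have k1: "1 \<le> ?k" by simp
  have "?k * ?e = exp (\<bar>N\<bar> / 2 + - N / 2)"
    by (simp only: exp_add)
  then have ke1: "1 \<le> ?k * ?e"
    by simp
  have "1 \<le> ?k * min 1 ?e"
    using k1 ke1 by (metis min_def mult.right_neutral)
  also have "\<dots> \<le> ?k * ?d"
    using MN_denominator_ge[OF assms, of N] by (intro mult_left_mono) auto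
  finally show "1 / ?d \<le> ?k"
    using MN_denominator_pos[OF assms, of N] by (simp add: divide_le_eq mult.commute)
  show "\<bar>?e - 1\<bar> \<le> \<bar>N\<bar> / 2 * ?k"
    using abs_exp_minus_one_le[of "- N / 2"] by simp
qed

lemma MN_bounds:
  fixes N x y :: real
  assumes x: "x \<in> {0..1}" and y: "y \<in> {0..1}"
  shows "MN1 N x \<le> exp (\<bar>N\<bar> / 2) ^ 3"
    and "\<bar>nonlin_MN N x\<bar> \<le> \<bar>N\<bar> * exp (\<bar>N\<bar> / 2) ^ 2"
    and "\<bar>nonlin_MN N x - nonlin_MN N y\<bar> \<le> N\<^sup>2 * exp (\<bar>N\<bar> / 2) ^ 4 / 2"
proof -
  define e k where "e = exp (- N / 2)" and "k = exp (\<bar>N\<bar> / 2)"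
  define dx dy where "dx = 1 + x * (e - 1)" and "dy = 1 + y * (e - 1)"
  have dpos: "0 < dx" "0 < dy"
    using MN_denominator_pos[OF x, of N] MN_denominator_pos[OF y, of N]
    unfolding dx_def dy_def e_def by auto
  have inv_d: "1 / dx \<le> k" "1 / dy \<le> k" and w: "\<bar>e - 1\<bar> \<le> \<bar>N\<bar> / 2 * k"
    using MN_parameter_bounds[OF x, of N] MN_parameter_bounds[OF y, of N]
    unfolding dx_def dy_def e_def k_def by auto
  have e_le: "e \<le> k" and k0: "0 < k"
    unfolding e_def k_def by auto
  have "MN1 N x = e * (1 / dx)\<^sup>2"
    unfolding MN1_def e_def[symmetric] dx_def[symmetric] by (simp add: power_divide)
  also have "\<dots> \<le> k * k\<^sup>2"
    using e_le inv_d dpos k0 by (intro mult_mono power_mono) auto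
  finally show "MN1 N x \<le> k ^ 3"
    by (simp add: power2_eq_square power3_eq_cube)
  have "nonlin_MN N x = (- 2) * (e - 1) * (1 / dx)"
    unfolding nonlin_MN_def e_def[symmetric] dx_def[symmetric] by simp
  then have "\<bar>nonlin_MN N x\<bar> = 2 * \<bar>e - 1\<bar> * (1 / dx)"
    using dpos by (simp only: abs_mult) simp
  also have "\<dots> \<le> 2 * (\<bar>N\<bar> / 2 * k) * k"
    using w inv_d dpos k0 by (intro mult_mono) auto
  finally show "\<bar>nonlin_MN N x\<bar> \<le> \<bar>N\<bar> * k ^ 2"
    by (simp add: power2_eq_square)
  have "nonlin_MN N x - nonlin_MN N y = 2 * (e - 1)\<^sup>2 * (x - y) * (1 / dx) * (1 / dy)"
    unfolding nonlin_MN_def e_def[symmetric] dx_def[symmetric] dy_def[symmetric]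
    using dpos by (simp add: field_simps dx_def dy_def power2_eq_square)
  then have "\<bar>nonlin_MN N x - nonlin_MN N y\<bar> = 2 * \<bar>e - 1\<bar>\<^sup>2 * \<bar>x - y\<bar> * (1 / dx) * (1 / dy)"
    using dpos by (simp add: abs_mult)
  also have "\<dots> \<le> 2 * (\<bar>N\<bar> / 2 * k)\<^sup>2 * 1 * k * k"
    using w inv_d dpos k0 x y by (intro mult_mono power_mono) auto
  also have "\<dots> = N\<^sup>2 * k ^ 4 / 2"
    by (simp add: eval_nat_numeral algebra_simps)
  finally show "\<bar>nonlin_MN N x - nonlin_MN N y\<bar> \<le> N\<^sup>2 * k ^ 4 / 2" .
qed

lemma MN_nonlin_near_N:
  assumes "x \<in> {0..1}"
  shows "\<bar>nonlin_MN N x - N\<bar> \<le> N\<^sup>2 * exp (\<bar>N\<bar> / 2) ^ 4 / 2"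
  using integral_deviation_le[OF nonlin_MN_integral MN_bounds(3) assms] .

lemma MN_bounds_uniform:
  assumes "\<bar>N\<bar> \<le> K" and x: "x \<in> {0..1}"
  shows "MN1 N x \<le> exp (K / 2) ^ 3" and "\<bar>nonlin_MN N x\<bar> \<le> K * exp (K / 2) ^ 2"
proof -
  have k: "0 \<le> exp (\<bar>N\<bar> / 2)" "exp (\<bar>N\<bar> / 2) \<le> exp (K / 2)"
    using assms by auto
  show "MN1 N x \<le> exp (K / 2) ^ 3"
    using MN_bounds(1)[OF x x, of N] power_mono[OF k(2) k(1), of 3] by linarith
  have "0 \<le> K" using assms(1) by linarith
  then show "\<bar>nonlin_MN N x\<bar> \<le> K * exp (K / 2) ^ 2"
    using MN_bounds(2)[OF x x, of N] mult_mono[OF assms(1) power_mono[OF k(2) k(1), of 2]]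
    by simp
qed

text \<open>A \<open>C^{2+\<nu>}\<close> diffeomorphism has \<open>f'\<close> bounded below, \<open>f''\<close> bounded, and hence a
  bounded, \<open>\<nu>\<close>-Hoelder nonlinearity \<open>f''/f'\<close> (\<open>f'\<close> is Lipschitz, so also \<open>\<nu>\<close>-Hoelder).\<close>

lemma C2nu_diffeo_raw_bounds:
  assumes "C2nu_diffeo \<nu> f" "0 < \<nu>"
  obtains f1 f2 m B H where "twice_deriv01 f f1 f2"
    and "0 < m" "\<And>s. s \<in> {0..1} \<Longrightarrow> m \<le> f1 s"
    and "\<And>s. s \<in> {0..1} \<Longrightarrow> \<bar>f2 s\<bar> \<le> B" "0 \<le> B"
    and "\<And>s t. s \<in> {0..1} \<Longrightarrow> t \<in> {0..1} \<Longrightarrow> \<bar>f2 s - f2 t\<bar> \<le> H * \<bar>s - t\<bar> powr \<nu>"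
proof -
  obtain f1 f2 H where
    fd: "\<forall>x\<in>{0..1}. (f has_real_derivative f1 x) (at x within {0..1})
                  \<and> (f1 has_real_derivative f2 x) (at x within {0..1}) \<and> 0 < f1 x"
    and hol: "\<forall>x\<in>{0..1}. \<forall>y\<in>{0..1}. \<bar>f2 x - f2 y\<bar> \<le> H * \<bar>x - y\<bar> powr \<nu>"
    using assms(1) unfolding C2nu_diffeo_def by blast
  have f: "twice_deriv01 f f1 f2"
    using fd unfolding twice_deriv01_def by auto
  have "continuous_on {0..1} f1"
    by (rule DERIV_continuous_on[where D=f2]) (use fd in blast)
  then have "\<exists>x\<in>{0..1}. \<forall>y\<in>{0..1}. f1 x \<le> f1 y"
    by (intro continuous_attains_inf compact_Icc) auto
  then obtain x0 where x0: "x0 \<in> {0..1}" "\<And>s. s \<in> {0..1} \<Longrightarrow> f1 x0 \<le> f1 s"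
    by blast
  have "continuous_on {0..1} f2"
    using hol assms(2) by (intro hoelder_imp_continuous_on[where H=H]) auto
  then have "bounded (f2 ` {0..1})"
    by (intro compact_imp_bounded compact_continuous_image) auto
  then obtain B0 where B0: "\<forall>s\<in>{0..1}. \<bar>f2 s\<bar> \<le> B0"
    unfolding bounded_real by blast
  have B: "\<bar>f2 s\<bar> \<le> \<bar>B0\<bar>" if "s \<in> {0..1}" for s
    using B0 that abs_ge_self[of B0] by (meson order_trans)
  have m: "0 < f1 x0"
    using fd x0(1) by blast
  have hol': "\<bar>f2 s - f2 t\<bar> \<le> H * \<bar>s - t\<bar> powr \<nu>" if "s \<in> {0..1}" "t \<in> {0..1}" for s t
    using hol that by blast
  show thesis
    by (rule that[OF f m x0(2) B abs_ge_zero hol'])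
qed

lemma C2nu_diffeo_nonlin_bounds:
  assumes "C2nu_diffeo \<nu> f" "0 < \<nu>" "\<nu> \<le> 1"
  obtains f1 f2 K H where "twice_deriv01 f f1 f2" "\<And>x. x \<in> {0..1} \<Longrightarrow> 0 < f1 x"
    and "\<And>s. s \<in> {0..1} \<Longrightarrow> \<bar>f2 s / f1 s\<bar> \<le> K"
    and "\<And>s t. s \<in> {0..1} \<Longrightarrow> t \<in> {0..1} \<Longrightarrow>
           \<bar>f2 s / f1 s - f2 t / f1 t\<bar> \<le> H * \<bar>s - t\<bar> powr \<nu>"
proof -
  obtain f1 f2 m B H where f: "twice_deriv01 f f1 f2"
    and m: "0 < m" "\<And>s. s \<in> {0..1} \<Longrightarrow> m \<le> f1 s"
    and B: "\<And>s. s \<in> {0..1} \<Longrightarrow> \<bar>f2 s\<bar> \<le> B" "0 \<le> B"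
    and hol: "\<And>s t. s \<in> {0..1} \<Longrightarrow> t \<in> {0..1} \<Longrightarrow> \<bar>f2 s - f2 t\<bar> \<le> H * \<bar>s - t\<bar> powr \<nu>"
    using C2nu_diffeo_raw_bounds[OF assms(1,2)] by blast
  have pos: "0 < f1 x" if "x \<in> {0..1}" for x
    using m(1) m(2)[OF that] by linarith
  have f1_hoelder: "\<bar>f1 t - f1 s\<bar> \<le> B * \<bar>s - t\<bar> powr \<nu>"
    if "s \<in> {0..1}" "t \<in> {0..1}" for s t
  proof -
    have "norm (f1 t - f1 s) \<le> B * norm (t - s)"
      using f B that unfolding twice_deriv01_def
      by (intro field_differentiable_bound[OF convex_real_interval(5)]) auto
    also have "\<dots> \<le> B * \<bar>s - t\<bar> powr \<nu>"
      using that assms(3) B(2) le_powr_of_le_one[of "\<bar>s - t\<bar>" \<nu>]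
      by (intro mult_left_mono) (auto simp: abs_minus_commute)
    finally show ?thesis by simp
  qed
  show thesis
  proof (rule that[OF f pos])
    show "\<bar>f2 s / f1 s\<bar> \<le> B / m" if "s \<in> {0..1}" for s
      using B m pos[OF that] that by (simp add: frac_le)
    show "\<bar>f2 s / f1 s - f2 t / f1 t\<bar> \<le> (H / m + B\<^sup>2 / m\<^sup>2) * \<bar>s - t\<bar> powr \<nu>"
      if "s \<in> {0..1}" "t \<in> {0..1}" for s t
      by (rule quotient_diff_le) (use m B hol f1_hoelder that in auto)
  qed
qed

lemma affine_maps_into_unit:
  fixes a b x :: real
  assumes "0 \<le> a" "a < b" "b \<le> 1" "x \<in> {0..1}"
  shows "a + (b - a) * x \<in> {0..1}"
proof -
  have "(b - a) * x \<le> b - a" using assms by (simp add: mult_left_le)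
  moreover have "0 \<le> (b - a) * x" using assms by simp
  ultimately have "0 \<le> a + (b - a) * x" "a + (b - a) * x \<le> 1" using assms by linarith+
  then show ?thesis by simp
qed

lemma increasing_of_pos_deriv:
  assumes f: "twice_deriv01 f f1 f2" and pos: "\<And>x. x \<in> {0..1} \<Longrightarrow> 0 < f1 x"
    and ab: "0 \<le> a" "a < b" "b \<le> 1"
  shows "f a < f b"
proof (rule DERIV_pos_imp_increasing_open[OF ab(2)])
  have "continuous_on {0..1} f"
    using f unfolding twice_deriv01_def by (intro DERIV_continuous_on[where D=f1]) blast
  then show "continuous_on {a..b} f"
    by (rule continuous_on_subset) (use ab in auto)
  fix x assume "a < x" "x < b"
  then have x: "0 < x" "x < 1" using ab by auto
  then have "(f has_real_derivative f1 x) (at x within {0..1})"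
    using f unfolding twice_deriv01_def by auto
  then have "DERIV f x :> f1 x"
    using at_within_Icc_at[of 0 x 1] x by simp
  then show "\<exists>y. DERIV f x :> y \<and> y > 0" using pos[of x] x by auto
qed

lemma zoom_twice_deriv01:
  assumes f: "twice_deriv01 f f1 f2" and ab: "0 \<le> a" "a < b" "b \<le> 1"
  shows "twice_deriv01 (zoom a b f)
           (\<lambda>x. f1 (a + (b - a) * x) * (b - a) / (f b - f a))
           (\<lambda>x. f2 (a + (b - a) * x) * (b - a) * (b - a) / (f b - f a))"
  unfolding twice_deriv01_def
proof (intro ballI conjI)
  fix x :: real assume x: "x \<in> {0..1}"
  let ?A = "\<lambda>x. a + (b - a) * x"
  have A_into: "?A ` {0..1} \<subseteq> {0..1}"
    using affine_maps_into_unit[OF ab] by blast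
  have dA: "(?A has_real_derivative b - a) (at x within {0..1})"
    by (auto intro!: derivative_eq_intros)
  have chain: "((\<lambda>x. h (?A x)) has_real_derivative h' (?A x) * (b - a)) (at x within {0..1})"
    if "\<And>y. y \<in> {0..1} \<Longrightarrow> (h has_real_derivative h' y) (at y within {0..1})" for h h'
  proof -
    have "(h has_real_derivative h' (?A x)) (at (?A x) within ?A ` {0..1})"
      using that[of "?A x"] A_into x by (meson DERIV_subset image_subset_iff)
    from DERIV_image_chain[OF this dA] show ?thesis by (simp add: o_def)
  qed
  have "((\<lambda>x. f (?A x)) has_real_derivative f1 (?A x) * (b - a)) (at x within {0..1})"
    using chain[of f f1] f unfolding twice_deriv01_def by blast
  from DERIV_cdivide[OF DERIV_diff[OF this DERIV_const[where k="f a"]], where c="f b - f a"]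
  show "(zoom a b f has_real_derivative f1 (?A x) * (b - a) / (f b - f a)) (at x within {0..1})"
    unfolding zoom_def by simp
  show "((\<lambda>x. f1 (?A x) * (b - a) / (f b - f a)) has_real_derivative
          f2 (?A x) * (b - a) * (b - a) / (f b - f a)) (at x within {0..1})"
    using chain[of f1 f2] f unfolding twice_deriv01_def
    by (auto intro!: DERIV_cdivide DERIV_cmult_right)
qed

lemma zoom_nonlin:
  assumes f: "twice_deriv01 f f1 f2" and pos: "\<And>x. x \<in> {0..1} \<Longrightarrow> 0 < f1 x"
    and ab: "0 \<le> a" "a < b" "b \<le> 1" and x: "x \<in> {0..1}"
  shows "nonlin (zoom a b f) x = (b - a) * (f2 (a + (b - a) * x) / f1 (a + (b - a) * x))"
proof -
  have cancel: "(q * d * d / L) / (p * d / L) = d * (q / p)"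
    if "p \<noteq> 0" "d \<noteq> 0" "L \<noteq> 0" for p q d L :: real
    using that by (simp add: field_simps)
  show ?thesis
    using twice_deriv01_nonlin[OF zoom_twice_deriv01[OF f ab] x]
      increasing_of_pos_deriv[OF f pos ab] pos[OF affine_maps_into_unit[OF ab x]] ab
    by (simp add: cancel)
qed

lemma zoom_normalized:
  assumes f: "twice_deriv01 f f1 f2" and pos: "\<And>x. x \<in> {0..1} \<Longrightarrow> 0 < f1 x"
    and ab: "0 \<le> a" "a < b" "b \<le> 1"
  obtains g1 g2 where "twice_deriv01 (zoom a b f) g1 g2" "\<And>x. x \<in> {0..1} \<Longrightarrow> 0 < g1 x"
    and "zoom a b f 0 = 0" "zoom a b f 1 = 1"
proof -
  have fab: "f a < f b"
    by (rule increasing_of_pos_deriv[OF f pos ab])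
  show thesis
  proof (rule that[OF zoom_twice_deriv01[OF f ab]])
    show "0 < f1 (a + (b - a) * x) * (b - a) / (f b - f a)" if "x \<in> {0..1}" for x
      using pos[OF affine_maps_into_unit[OF ab that]] fab ab by simp
  qed (use fab in \<open>simp_all add: zoom_def\<close>)
qed

lemma zoom_nonlin_hoelder:
  fixes H \<nu> :: real
  assumes f: "twice_deriv01 f f1 f2" and pos: "\<And>x. x \<in> {0..1} \<Longrightarrow> 0 < f1 x"
    and hoelder: "\<And>s t. s \<in> {0..1} \<Longrightarrow> t \<in> {0..1} \<Longrightarrow>
                    \<bar>f2 s / f1 s - f2 t / f1 t\<bar> \<le> H * \<bar>s - t\<bar> powr \<nu>"
    and ab: "0 \<le> a" "a < b" "b \<le> 1" and x: "x \<in> {0..1}" and y: "y \<in> {0..1}"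
  shows "\<bar>nonlin (zoom a b f) x - nonlin (zoom a b f) y\<bar>
           \<le> ((b - a) * H * (b - a) powr \<nu>) * \<bar>x - y\<bar> powr \<nu>"
proof -
  define \<delta> where "\<delta> = b - a"
  define n where "n s = f2 s / f1 s" for s
  have \<delta>: "0 < \<delta>" using ab unfolding \<delta>_def by simp
  have into: "a + \<delta> * t \<in> {0..1}" if "t \<in> {0..1}" for t
    using affine_maps_into_unit[OF ab that] unfolding \<delta>_def .
  have nl: "nonlin (zoom a b f) t = \<delta> * n (a + \<delta> * t)" if "t \<in> {0..1}" for t
    using zoom_nonlin[OF f pos ab that] unfolding \<delta>_def n_def .
  have "\<bar>nonlin (zoom a b f) x - nonlin (zoom a b f) y\<bar> = \<delta> * \<bar>n (a + \<delta> * x) - n (a + \<delta> * y)\<bar>"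
    unfolding nl[OF x] nl[OF y] using \<delta> by (simp add: abs_mult right_diff_distrib[symmetric])
  also have "\<dots> \<le> \<delta> * (H * \<bar>(a + \<delta> * x) - (a + \<delta> * y)\<bar> powr \<nu>)"
    using hoelder[OF into[OF x] into[OF y]] \<delta> unfolding n_def by (intro mult_left_mono) auto
  also have "\<bar>(a + \<delta> * x) - (a + \<delta> * y)\<bar> powr \<nu> = \<delta> powr \<nu> * \<bar>x - y\<bar> powr \<nu>"
    using \<delta> by (simp add: abs_mult powr_mult right_diff_distrib[symmetric])
  finally show ?thesis
    unfolding \<delta>_def by (simp add: ac_simps)
qed

lemma zoom_Nint_estimates:
  fixes H K \<nu> :: real
  assumes f: "twice_deriv01 f f1 f2" and pos: "\<And>x. x \<in> {0..1} \<Longrightarrow> 0 < f1 x"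
    and bound: "\<And>s. s \<in> {0..1} \<Longrightarrow> \<bar>f2 s / f1 s\<bar> \<le> K"
    and hoelder: "\<And>s t. s \<in> {0..1} \<Longrightarrow> t \<in> {0..1} \<Longrightarrow>
                    \<bar>f2 s / f1 s - f2 t / f1 t\<bar> \<le> H * \<bar>s - t\<bar> powr \<nu>"
    and \<nu>: "0 < \<nu>" and ab: "0 \<le> a" "a < b" "b \<le> 1"
  shows "\<And>x. x \<in> {0..1} \<Longrightarrow>
           \<bar>nonlin (zoom a b f) x - Nint (zoom a b f)\<bar> \<le> H * (b - a) powr (1 + \<nu>)"
    and "\<bar>Nint (zoom a b f)\<bar> \<le> (K + H) * (b - a)"
proof -
  define \<delta> where "\<delta> = b - a"
  let ?n = "nonlin (zoom a b f)"
  have \<delta>: "0 < \<delta>" "\<delta> \<le> 1" using ab unfolding \<delta>_def by auto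
  have H0: "0 \<le> H"
    using hoelder by (rule hoelder_const_nonneg)
  have osc: "\<bar>?n x - ?n y\<bar> \<le> H * \<delta> powr (1 + \<nu>)" if "x \<in> {0..1}" "y \<in> {0..1}" for x y
  proof -
    have "\<bar>x - y\<bar> powr \<nu> \<le> 1"
      using that \<nu> by (intro powr_le1) auto
    then have "(\<delta> * H * \<delta> powr \<nu>) * \<bar>x - y\<bar> powr \<nu> \<le> \<delta> * H * \<delta> powr \<nu>"
      using \<delta> H0 by (intro mult_left_le) auto
    also have "\<dots> = H * \<delta> powr (1 + \<nu>)"
      using \<delta> by (simp add: powr_add)
    finally show ?thesis
      using zoom_nonlin_hoelder[OF f pos hoelder ab that] unfolding \<delta>_def by linarith
  qed
  have "continuous_on {0..1} ?n"
    using zoom_nonlin_hoelder[OF f pos hoelder ab] \<nu> by (rule hoelder_imp_continuous_on)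
  then have int: "(?n has_integral Nint (zoom a b f)) {0..1}"
    unfolding Nint_def by (intro integrable_integral integrable_continuous_interval)
  show close: "\<bar>?n x - Nint (zoom a b f)\<bar> \<le> H * (b - a) powr (1 + \<nu>)" if "x \<in> {0..1}" for x
    using integral_deviation_le[OF int osc that] unfolding \<delta>_def .
  have "\<bar>?n 0\<bar> = \<delta> * \<bar>f2 a / f1 a\<bar>"
    using zoom_nonlin[OF f pos ab, of 0] \<delta> unfolding \<delta>_def by (simp add: abs_mult)
  also have "\<dots> \<le> \<delta> * K"
    using bound[of a] ab \<delta> by (intro mult_left_mono) auto
  finally have "\<bar>?n 0\<bar> \<le> \<delta> * K" .
  moreover have "H * \<delta> powr (1 + \<nu>) \<le> H * \<delta>"
    using \<delta> \<nu> H0 powr_mono'[of 1 "1 + \<nu>" \<delta>] by (intro mult_left_mono) auto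
  ultimately show "\<bar>Nint (zoom a b f)\<bar> \<le> (K + H) * (b - a)"
    using close[of 0] unfolding \<delta>_def by (simp add: algebra_simps)
qed

lemma zoom_nonlin_close_to_MN:
  fixes K H \<nu> :: real
  assumes f: "twice_deriv01 f f1 f2" and pos: "\<And>x. x \<in> {0..1} \<Longrightarrow> 0 < f1 x"
    and bound: "\<And>s. s \<in> {0..1} \<Longrightarrow> \<bar>f2 s / f1 s\<bar> \<le> K"
    and hoelder: "\<And>s t. s \<in> {0..1} \<Longrightarrow> t \<in> {0..1} \<Longrightarrow>
                    \<bar>f2 s / f1 s - f2 t / f1 t\<bar> \<le> H * \<bar>s - t\<bar> powr \<nu>"
    and \<nu>: "0 < \<nu>" "\<nu> \<le> 1" and ab: "0 \<le> a" "a < b" "b \<le> 1"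
  shows "\<bar>Nint (zoom a b f)\<bar> \<le> K + H"
    and "\<And>x. x \<in> {0..1} \<Longrightarrow> \<bar>nonlin (zoom a b f) x - nonlin_MN (Nint (zoom a b f)) x\<bar>
           \<le> (H + (K + H)\<^sup>2 * exp ((K + H) / 2) ^ 4 / 2) * (b - a) powr (1 + \<nu>)"
proof -
  define N P where "N = Nint (zoom a b f)" and "P = (b - a) powr (1 + \<nu>)"
  have P: "(b - a)\<^sup>2 \<le> P" "0 \<le> P"
    using powr_one_plus_bounds[of "b - a" \<nu>] \<nu> ab unfolding P_def by auto
  have N_le: "\<bar>N\<bar> \<le> (K + H) * (b - a)"
    using zoom_Nint_estimates(2)[OF f pos bound hoelder \<nu>(1) ab] unfolding N_def .
  have "\<bar>f2 0 / f1 0\<bar> \<le> K" by (rule bound) simp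
  then have "0 \<le> K + H"
    using abs_ge_zero[of "f2 0 / f1 0"] hoelder_const_nonneg[OF hoelder] by linarith
  then have "(K + H) * (b - a) \<le> K + H"
    using ab by (intro mult_left_le) auto
  with N_le show N_le1: "\<bar>Nint (zoom a b f)\<bar> \<le> K + H"
    unfolding N_def by linarith
  have k: "0 \<le> exp (\<bar>N\<bar> / 2)" "exp (\<bar>N\<bar> / 2) \<le> exp ((K + H) / 2)"
    using N_le1 unfolding N_def by auto
  have "N\<^sup>2 \<le> ((K + H) * (b - a))\<^sup>2"
    using N_le by (metis abs_ge_zero power2_abs power_mono)
  also have "\<dots> \<le> (K + H)\<^sup>2 * P"
    using P by (simp add: power_mult_distrib mult_left_mono)
  finally have "N\<^sup>2 * exp (\<bar>N\<bar> / 2) ^ 4 / 2 \<le> (K + H)\<^sup>2 * P * exp ((K + H) / 2) ^ 4 / 2"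
    using power_mono[OF k(2) k(1), of 4] P(2) by (intro divide_right_mono mult_mono) auto
  then have MN_near_N: "\<bar>nonlin_MN N x - N\<bar> \<le> (K + H)\<^sup>2 * exp ((K + H) / 2) ^ 4 / 2 * P"
    if "x \<in> {0..1}" for x
    using MN_nonlin_near_N[OF that, of N] by (simp add: algebra_simps)
  show "\<bar>nonlin (zoom a b f) x - nonlin_MN (Nint (zoom a b f)) x\<bar>
          \<le> (H + (K + H)\<^sup>2 * exp ((K + H) / 2) ^ 4 / 2) * (b - a) powr (1 + \<nu>)"
    if x: "x \<in> {0..1}" for x
  proof -
    have "\<bar>nonlin (zoom a b f) x - N\<bar> \<le> H * P"
      using zoom_Nint_estimates(1)[OF f pos bound hoelder \<nu>(1) ab x] unfolding N_def P_def .
    then have "\<bar>nonlin (zoom a b f) x - nonlin_MN N x\<bar>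
        \<le> H * P + (K + H)\<^sup>2 * exp ((K + H) / 2) ^ 4 / 2 * P"
      using MN_near_N[OF x] by linarith
    then show ?thesis
      unfolding N_def[symmetric] P_def[symmetric] by (simp add: algebra_simps)
  qed
qed

definition zoom_constant :: "real \<Rightarrow> real \<Rightarrow> real" where
  "zoom_constant K H =
     (let E = exp ((K + H) / 2); Ke = H + (K + H)\<^sup>2 * E ^ 4 / 2
      in E ^ 3 * (3 + (K + H) * E\<^sup>2) * (Ke * exp Ke))"

lemma zoom_close_to_MN:
  fixes K H \<nu> :: real
  assumes f: "twice_deriv01 f f1 f2" and pos: "\<And>x. x \<in> {0..1} \<Longrightarrow> 0 < f1 x"
    and bound: "\<And>s. s \<in> {0..1} \<Longrightarrow> \<bar>f2 s / f1 s\<bar> \<le> K"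
    and hoelder: "\<And>s t. s \<in> {0..1} \<Longrightarrow> t \<in> {0..1} \<Longrightarrow>
                    \<bar>f2 s / f1 s - f2 t / f1 t\<bar> \<le> H * \<bar>s - t\<bar> powr \<nu>"
    and \<nu>: "0 < \<nu>" "\<nu> \<le> 1" and ab: "0 \<le> a" "a < b" "b \<le> 1"
  shows "dC2 (zoom a b f) (MN (Nint (zoom a b f))) \<le> zoom_constant K H * (b - a) powr (1 + \<nu>)"
proof -
  define E Ke where "E = exp ((K + H) / 2)" and "Ke = H + (K + H)\<^sup>2 * E ^ 4 / 2"
  define N P where "N = Nint (zoom a b f)" and "P = (b - a) powr (1 + \<nu>)"
  obtain g1 g2 where g: "twice_deriv01 (zoom a b f) g1 g2"
    and g1_pos: "\<And>x. x \<in> {0..1} \<Longrightarrow> 0 < g1 x" and g01: "zoom a b f 0 = 0" "zoom a b f 1 = 1"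
    using zoom_normalized[OF f pos ab] by blast
  have ends: "zoom a b f 0 = MN N 0" "zoom a b f 1 = MN N 1"
    using g01 MN_endpoints[of N] by simp_all
  have N_le: "\<bar>N\<bar> \<le> K + H"
    using zoom_nonlin_close_to_MN(1)[OF f pos bound hoelder \<nu> ab] unfolding N_def .
  then have KH0: "0 \<le> K + H"
    by linarith
  have Ke0: "0 \<le> Ke"
    unfolding Ke_def using KH0 hoelder_const_nonneg[OF hoelder] by simp
  have P: "0 \<le> P" "P \<le> 1"
    unfolding P_def using ab \<nu> by (auto intro: powr_le1)
  have close: "\<bar>g2 x / g1 x - MN2 N x / MN1 N x\<bar> \<le> Ke * P" if "x \<in> {0..1}" for x
    using zoom_nonlin_close_to_MN(2)[OF f pos bound hoelder \<nu> ab that]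
      twice_deriv01_nonlin[OF g that] MN_nonlin[OF that]
    unfolding Ke_def E_def N_def P_def by simp
  have "dC2 (zoom a b f) (MN N) \<le> E ^ 3 * (3 + (K + H) * E\<^sup>2) * (Ke * P * exp (Ke * P))"
  proof (rule dC2_le_of_nonlin_close[OF g MN_twice_deriv01 g1_pos MN1_pos ends close])
    fix x :: real assume x: "x \<in> {0..1}"
    show "MN1 N x \<le> E ^ 3"
      using MN_bounds_uniform(1)[OF N_le x] unfolding E_def .
    show "\<bar>MN2 N x / MN1 N x\<bar> \<le> (K + H) * E\<^sup>2"
      using MN_bounds_uniform(2)[OF N_le x] MN_nonlin[OF x] unfolding E_def by simp
  qed
  also have "\<dots> \<le> E ^ 3 * (3 + (K + H) * E\<^sup>2) * (Ke * exp Ke) * P"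
    using mult_exp_le_of_le_one[OF Ke0 P] KH0 unfolding E_def
    by (simp add: mult_left_mono mult.assoc)
  also have "\<dots> = zoom_constant K H * P"
    unfolding zoom_constant_def E_def Ke_def by (simp add: Let_def)
  finally show ?thesis
    unfolding N_def P_def .
qed

theorem proposition2p1:
  fixes f :: "real \<Rightarrow> real" and \<nu> :: real
  assumes "0 < \<nu>" and "\<nu> \<le> 1"
    and "C2nu_diffeo \<nu> f"
  shows "\<exists>C>0. \<forall>a b. 0 \<le> a \<and> a < b \<and> b \<le> 1 \<longrightarrow>
           dC2 (zoom a b f) (MN (Nint (zoom a b f))) \<le> C * (b - a) powr (1 + \<nu>)"
proof -
  obtain f1 f2 K H where f: "twice_deriv01 f f1 f2" and pos: "\<And>x. x \<in> {0..1} \<Longrightarrow> 0 < f1 x"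
    and bound: "\<And>s. s \<in> {0..1} \<Longrightarrow> \<bar>f2 s / f1 s\<bar> \<le> K"
    and hoelder: "\<And>s t. s \<in> {0..1} \<Longrightarrow> t \<in> {0..1} \<Longrightarrow>
                    \<bar>f2 s / f1 s - f2 t / f1 t\<bar> \<le> H * \<bar>s - t\<bar> powr \<nu>"
    using C2nu_diffeo_nonlin_bounds[OF assms(3,1,2)] by blast
  show ?thesis
  proof (intro exI[of _ "max (zoom_constant K H) 1"] conjI allI impI)
    fix a b :: real assume ab: "0 \<le> a \<and> a < b \<and> b \<le> 1"
    have "dC2 (zoom a b f) (MN (Nint (zoom a b f))) \<le> zoom_constant K H * (b - a) powr (1 + \<nu>)"
      by (rule zoom_close_to_MN[OF f pos bound hoelder assms(1,2)]) (use ab in auto)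
    also have "\<dots> \<le> max (zoom_constant K H) 1 * (b - a) powr (1 + \<nu>)"
      by (intro mult_right_mono) auto
    finally show "dC2 (zoom a b f) (MN (Nint (zoom a b f)))
        \<le> max (zoom_constant K H) 1 * (b - a) powr (1 + \<nu>)" .
  qed simp
qed

end
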